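(* Let $b\in\mathbb{N}$, $0\le a\le b-1$, and let $m,n\ge2$ be the minimal integers with $ma\equiv a\pmod b$ and $a^n\equiv a\pmod b$ (assumed to exist). Put $I=(m-1)a/b$ and $J=(a^n-a)/b$ (these are nonnegative integers). Let $q\in\mathbb{N}$ and for $k=0,\dots,q-1$ let $x''_k=\{a+bk+bql : l\in\mathbb{Z}\}$ be the secondary classes. Define $\nu''_m[x''_{k_1},\dots,x''_{k_m}]$ to be the secondary class containing $x_{k_1}+\dots+x_{k_m}$ and $\mu''_n[x''_{k_1},\dots,x''_{k_n}]$ the secondary class containing $x_{k_1}\cdots x_{k_n}$, where $x_{k_i}$ is any representative of $x''_{k_i}$. Then these operations are well defined, commutative, satisfy polyadic distributivity, and $$\nu''_m[x''_{k_1},\dots,x''_{k_m}]=x''_{k_{add}},\qquad k_{add}\equiv (k_1+\dots+k_m)+I \pmod q,$$ $$\mu''_n[x''_{k_1},\dots,x''_{k_n}]=x''_{k_{mult}},\qquad k_{mult}\equiv \sum_{j=1}^{n} a^{n-j}b^{j-1}e_j(k_1,\dots,k_n)+J \pmod q,$$ where $e_j$ is the $j$-th elementary symmetric polynomial (so $e_1=k_1+\dots+k_n$, $e_2=\sum_{i<j}k_ik_j$, …, $e_n=k_1\cdots k_n$).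
   Context: Polyadic distributivity means: for all elements, $\mu''_n[\nu''_m[y_1,\dots,y_m],x_2,\dots,x_n]=\nu''_m[\mu''_n[y_1,x_2,\dots,x_n],\dots,\mu''_n[y_m,x_2,\dots,x_n]]$ (and likewise with the sum in any argument position of $\mu''_n$). *)

theory Defs
  imports "HOL-Number_Theory.Cong"
begin

definition sclass :: "int \<Rightarrow> int \<Rightarrow> int \<Rightarrow> int \<Rightarrow> int set" where
  "sclass a b q k = {a + b*k + b*q*l | l. True}"

definition secondary_classes :: "int \<Rightarrow> int \<Rightarrow> int \<Rightarrow> int set set" where
  "secondary_classes a b q = {sclass a b q k | k. 0 \<le> k \<and> k < q}"

definition nu2 :: "int \<Rightarrow> int \<Rightarrow> int \<Rightarrow> int set list \<Rightarrow> int set" where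
  "nu2 a b q Xs = (THE C. C \<in> secondary_classes a b q \<and>
      sum_list (map (\<lambda>X. SOME x. x \<in> X) Xs) \<in> C)"

definition mu2 :: "int \<Rightarrow> int \<Rightarrow> int \<Rightarrow> int set list \<Rightarrow> int set" where
  "mu2 a b q Xs = (THE C. C \<in> secondary_classes a b q \<and>
      prod_list (map (\<lambda>X. SOME x. x \<in> X) Xs) \<in> C)"

definition esym :: "nat \<Rightarrow> int list \<Rightarrow> int" where
  "esym j ks = (\<Sum>S\<in>{S. S \<subseteq> {0..<length ks} \<and> card S = j}. \<Prod>i\<in>S. ks ! i)"

end

theory Submission
  imports Defs
begin

text \<open>Every secondary class consists of integers congruent to \<open>a\<close> modulo \<open>b\<close>, and two such
  integers lie in the same class iff they are congruent modulo \<open>bq\<close>. Since \<open>ma \<equiv> a\<close> and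
  \<open>a\<^sup>n \<equiv> a\<close> modulo \<open>b\<close>, a sum of \<open>m\<close> (a product of \<open>n\<close>) elements of secondary classes is
  again \<open>\<equiv> a\<close>, and its class depends only on the classes of the summands (factors). So
  \<open>\<nu>''\<close> and \<open>\<mu>''\<close> are the class of the sum (product) of arbitrary representatives:
  commutativity and distributivity are inherited from \<open>\<int>\<close>, and the explicit formulas follow
  by expanding \<open>\<Sum>(a + bk\<^sub>i)\<close> and \<open>\<Prod>(a + bk\<^sub>i)\<close>.\<close>

lemma sum_list_cong:
  fixes xs ys :: "'a::unique_euclidean_semiring list"
  assumes "list_all2 (\<lambda>x y. [x = y] (mod m)) xs ys"
  shows "[sum_list xs = sum_list ys] (mod m)"
  using assms by (induction rule: list_all2_induct) (simp_all add: cong_add)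

lemma prod_list_cong:
  fixes xs ys :: "'a::unique_euclidean_semiring list"
  assumes "list_all2 (\<lambda>x y. [x = y] (mod m)) xs ys"
  shows "[prod_list xs = prod_list ys] (mod m)"
  using assms by (induction rule: list_all2_induct) (simp_all add: cong_mult)

lemma sum_list_cong_const:
  fixes xs :: "'a::unique_euclidean_semiring list"
  assumes "\<forall>x\<in>set xs. [x = c] (mod m)"
  shows "[sum_list xs = of_nat (length xs) * c] (mod m)"
proof -
  have "[sum_list xs = sum_list (replicate (length xs) c)] (mod m)"
    using assms by (intro sum_list_cong) (simp add: list_all2_conv_all_nth)
  then show ?thesis by (simp add: sum_list_replicate)
qed

lemma prod_list_cong_const:
  fixes xs :: "'a::unique_euclidean_semiring list"
  assumes "\<forall>x\<in>set xs. [x = c] (mod m)"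
  shows "[prod_list xs = c ^ length xs] (mod m)"
proof -
  have "[prod_list xs = prod_list (replicate (length xs) c)] (mod m)"
    using assms by (intro prod_list_cong) (simp add: list_all2_conv_all_nth)
  then show ?thesis by simp
qed

lemma prod_list_update:
  fixes xs :: "'a::comm_monoid_mult list"
  assumes "i < length xs"
  shows "prod_list (xs[i := y]) = prod_list (take i xs) * y * prod_list (drop (Suc i) xs)"
  using assms by (simp add: upd_conv_take_nth_drop mult.assoc)

lemma prod_list_update_sum_list:
  fixes xs :: "'a::comm_semiring_1 list"
  assumes "i < length xs"
  shows "prod_list (xs[i := sum_list ys]) = sum_list (map (\<lambda>y. prod_list (xs[i := y])) ys)"
  using assms by (simp add: prod_list_update sum_list_const_mult sum_list_mult_const)

lemma sum_list_affine:
  fixes a b :: "'a::comm_semiring_1"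
  shows "sum_list (map (\<lambda>k. a + b * k) ks) = of_nat (length ks) * a + b * sum_list ks"
  by (induction ks) (simp_all add: algebra_simps)

lemma esym_0: "esym 0 ks = 1"
proof -
  have "{S. S \<subseteq> {0..<length ks} \<and> card S = 0} = {{}}"
    by (auto dest: finite_subset)
  then show ?thesis unfolding esym_def by simp
qed

text \<open>Vieta's expansion: the factors are split into those contributing \<open>b k\<^sub>i\<close> (a set \<open>B\<close>
  of indices) and those contributing \<open>a\<close>, and the terms are grouped by \<open>card B\<close>.\<close>
lemma prod_list_affine_expand:
  fixes a b :: int
  shows "prod_list (map (\<lambda>k. a + b * k) ks)
    = (\<Sum>j=0..length ks. a ^ (length ks - j) * b ^ j * esym j ks)"
proof -
  let ?n = "length ks" and ?A = "{0..<length ks}"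
  let ?term = "\<lambda>B. a ^ (?n - card B) * b ^ card B * (\<Prod>i\<in>B. ks ! i)"
  have "prod_list (map (\<lambda>k. a + b * k) ks) = (\<Prod>i\<in>?A. b * ks ! i + a)"
    by (simp add: prod.list_conv_set_nth add.commute)
  also have "\<dots> = (\<Sum>B\<in>Pow ?A. (\<Prod>i\<in>B. b * ks ! i) * (\<Prod>i\<in>?A - B. a))"
    by (rule prod_add) simp
  also have "\<dots> = (\<Sum>B\<in>Pow ?A. ?term B)"
  proof (rule sum.cong)
    fix B assume "B \<in> Pow ?A"
    then have "card (?A - B) = ?n - card B"
      by (simp add: card_Diff_subset finite_subset)
    then show "(\<Prod>i\<in>B. b * ks ! i) * (\<Prod>i\<in>?A - B. a) = ?term B"
      by (simp add: prod.distrib)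
  qed simp
  also have "\<dots> = (\<Sum>j=0..?n. \<Sum>B\<in>{B. B \<in> Pow ?A \<and> card B = j}. ?term B)"
    by (rule sum.group[symmetric]) (auto dest: card_mono[of ?A, simplified])
  also have "\<dots> = (\<Sum>j=0..?n. a ^ (?n - j) * b ^ j * esym j ks)"
  proof (rule sum.cong)
    fix j
    have "{B. B \<in> Pow ?A \<and> card B = j} = {S. S \<subseteq> ?A \<and> card S = j}" by auto
    then show "(\<Sum>B\<in>{B. B \<in> Pow ?A \<and> card B = j}. ?term B) = a ^ (?n - j) * b ^ j * esym j ks"
      by (simp add: esym_def sum_distrib_left)
  qed simp
  finally show ?thesis .
qed

lemma prod_list_affine:
  fixes a b :: int
  shows "prod_list (map (\<lambda>k. a + b * k) ks)
    = a ^ length ks + b * (\<Sum>j=1..length ks. a ^ (length ks - j) * b ^ (j - 1) * esym j ks)"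
proof -
  let ?n = "length ks"
  have "prod_list (map (\<lambda>k. a + b * k) ks)
      = a ^ ?n + (\<Sum>j=Suc 0..?n. a ^ (?n - j) * b ^ j * esym j ks)"
    unfolding prod_list_affine_expand by (subst sum.atLeast_Suc_atMost) (simp_all add: esym_0)
  also have "(\<Sum>j=Suc 0..?n. a ^ (?n - j) * b ^ j * esym j ks)
      = b * (\<Sum>j=1..?n. a ^ (?n - j) * b ^ (j - 1) * esym j ks)"
    unfolding sum_distrib_left
    by (rule sum.cong) (auto simp: power_eq_if)
  finally show ?thesis .
qed

section \<open>Secondary classes\<close>

definition some_elem :: "'a set \<Rightarrow> 'a" where
  "some_elem = (\<lambda>X. SOME x. x \<in> X)"

text \<open>Only meaningful for \<open>z \<equiv> a (mod b)\<close>: otherwise no secondary class contains \<open>z\<close> and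
  the description yields an unspecified set.\<close>
definition class_of :: "int \<Rightarrow> int \<Rightarrow> int \<Rightarrow> int \<Rightarrow> int set" where
  "class_of a b q z = (THE C. C \<in> secondary_classes a b q \<and> z \<in> C)"

lemma nu2_eq_class_of: "nu2 a b q Xs = class_of a b q (sum_list (map some_elem Xs))"
  by (simp add: nu2_def class_of_def some_elem_def)

lemma mu2_eq_class_of: "mu2 a b q Xs = class_of a b q (prod_list (map some_elem Xs))"
  by (simp add: mu2_def class_of_def some_elem_def)

lemma mem_sclass_iff: "z \<in> sclass a b q k \<longleftrightarrow> [z = a + b * k] (mod b * q)"
  unfolding sclass_def cong_iff_dvd_diff dvd_def
  by (auto simp: algebra_simps)

lemma sclass_in_secondary_classes:
  "0 \<le> k \<Longrightarrow> k < q \<Longrightarrow> sclass a b q k \<in> secondary_classes a b q"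
  unfolding secondary_classes_def by blast

lemma secondary_class_mem_cong:
  assumes "X \<in> secondary_classes a b q" "x \<in> X" "y \<in> X"
  shows "[x = y] (mod b * q)"
proof -
  obtain k where "X = sclass a b q k"
    using assms(1) unfolding secondary_classes_def by blast
  then have "[x = a + b * k] (mod b * q)" "[y = a + b * k] (mod b * q)"
    using assms(2,3) mem_sclass_iff by blast+
  then show ?thesis
    by (metis cong_sym cong_trans)
qed

lemma secondary_class_mem_cong_base:
  assumes "X \<in> secondary_classes a b q" "x \<in> X"
  shows "[x = a] (mod b)"
proof -
  obtain k where "X = sclass a b q k"
    using assms(1) unfolding secondary_classes_def by blast
  then have "[x = a + b * k] (mod b)"
    using assms(2) mem_sclass_iff cong_modulus_mult by blast
  moreover have "[a + b * k = a] (mod b)"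
    by (simp add: cong_iff_dvd_diff)
  ultimately show ?thesis by (rule cong_trans)
qed

lemma some_elem_mem:
  assumes "X \<in> secondary_classes a b q"
  shows "some_elem X \<in> X"
proof -
  obtain k where "X = sclass a b q k"
    using assms unfolding secondary_classes_def by blast
  then have "a + b * k + b * q * 0 \<in> X"
    unfolding sclass_def by blast
  then show ?thesis
    unfolding some_elem_def by (rule someI)
qed

lemma mem_sclass_index:
  assumes "b > 0" "[z = a] (mod b)"
  shows "z \<in> sclass a b q ((z - a) div b mod q)"
proof -
  define t where "t = (z - a) div b"
  have "z = a + b * t"
    using assms(2) unfolding t_def by (simp add: cong_iff_dvd_diff dvd_diff_commute)
  moreover have "b * t = b * (t mod q) + b * q * (t div q)"
    by (metis div_mult_mod_eq distrib_left mult.assoc mult.commute add.commute)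
  ultimately have "z = a + b * (t mod q) + b * q * (t div q)"
    by simp
  then show ?thesis
    unfolding sclass_def t_def by blast
qed

lemma sclass_index_eq:
  assumes "b > 0" "z \<in> sclass a b q k" "0 \<le> k" "k < q"
  shows "(z - a) div b mod q = k"
proof -
  obtain l where "z = a + b * k + b * q * l"
    using assms(2) unfolding sclass_def by blast
  then have "(z - a) div b = k + q * l"
    using assms(1) by (simp add: algebra_simps)
  then show ?thesis using assms(3,4) by simp
qed

lemma class_of_eq:
  assumes "b > 0" "q > 0" "[z = a] (mod b)"
  shows "class_of a b q z = sclass a b q ((z - a) div b mod q)"
  unfolding class_of_def
proof (rule the_equality)
  show "sclass a b q ((z - a) div b mod q) \<in> secondary_classes a b q
      \<and> z \<in> sclass a b q ((z - a) div b mod q)"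
    using assms by (simp add: sclass_in_secondary_classes mem_sclass_index)
next
  fix C assume "C \<in> secondary_classes a b q \<and> z \<in> C"
  then obtain k where "C = sclass a b q k" "0 \<le> k" "k < q" "z \<in> C"
    unfolding secondary_classes_def by blast
  then show "C = sclass a b q ((z - a) div b mod q)"
    using sclass_index_eq assms(1) by simp
qed

lemma class_of_mem:
  assumes "b > 0" "q > 0" "[z = a] (mod b)"
  shows "class_of a b q z \<in> secondary_classes a b q" "z \<in> class_of a b q z"
  using assms by (simp_all add: class_of_eq sclass_in_secondary_classes mem_sclass_index)

lemma class_of_cong:
  assumes "b > 0" "q > 0" "[z = a] (mod b)" "[z' = z] (mod b * q)"
  shows "class_of a b q z' = class_of a b q z"
proof -
  obtain k where k: "class_of a b q z = sclass a b q k" "0 \<le> k" "k < q"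
    using class_of_eq[OF assms(1-3)] \<open>q > 0\<close> by simp
  have "z' \<in> sclass a b q k"
    using class_of_mem(2)[OF assms(1-3)] k(1) assms(4) mem_sclass_iff cong_trans by metis
  moreover have "[z' = a] (mod b)"
    using assms(3,4) cong_modulus_mult cong_trans by blast
  ultimately show ?thesis
    using class_of_eq assms(1,2) k sclass_index_eq by metis
qed

lemma representatives_cong:
  assumes "set Xs \<subseteq> secondary_classes a b q" "list_all2 (\<in>) xs Xs"
  shows "list_all2 (\<lambda>x y. [x = y] (mod b * q)) xs (map some_elem Xs)"
    and "\<forall>x\<in>set xs. [x = a] (mod b)"
  using assms(2,1)
  by (induction rule: list_all2_induct)
     (auto intro: secondary_class_mem_cong some_elem_mem secondary_class_mem_cong_base)

lemma nu2_eq_class_of_sum_list: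
  assumes "b > 0" "q > 0" "[int (length Xs) * a = a] (mod b)"
    and "set Xs \<subseteq> secondary_classes a b q" "list_all2 (\<in>) xs Xs"
  shows "nu2 a b q Xs = class_of a b q (sum_list xs)"
    and "[sum_list xs = a] (mod b)"
proof -
  have "length xs = length Xs"
    using assms(5) list_all2_lengthD by blast
  then show base: "[sum_list xs = a] (mod b)"
    using sum_list_cong_const[OF representatives_cong(2)[OF assms(4,5)]] assms(3)
    by (metis cong_trans)
  have "[sum_list (map some_elem Xs) = sum_list xs] (mod b * q)"
    using sum_list_cong[OF representatives_cong(1)[OF assms(4,5)]] by (rule cong_sym)
  then show "nu2 a b q Xs = class_of a b q (sum_list xs)"
    unfolding nu2_eq_class_of by (rule class_of_cong[OF assms(1,2) base])
qed

lemma mu2_eq_class_of_prod_list: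
  assumes "b > 0" "q > 0" "[a ^ length Xs = a] (mod b)"
    and "set Xs \<subseteq> secondary_classes a b q" "list_all2 (\<in>) xs Xs"
  shows "mu2 a b q Xs = class_of a b q (prod_list xs)"
    and "[prod_list xs = a] (mod b)"
proof -
  have "length xs = length Xs"
    using assms(5) list_all2_lengthD by blast
  then show base: "[prod_list xs = a] (mod b)"
    using prod_list_cong_const[OF representatives_cong(2)[OF assms(4,5)]] assms(3)
    by (metis cong_trans)
  have "[prod_list (map some_elem Xs) = prod_list xs] (mod b * q)"
    using prod_list_cong[OF representatives_cong(1)[OF assms(4,5)]] by (rule cong_sym)
  then show "mu2 a b q Xs = class_of a b q (prod_list xs)"
    unfolding mu2_eq_class_of by (rule class_of_cong[OF assms(1,2) base])
qed

lemma nu2_well_defined: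
  assumes "b > 0" "q > 0" "[int (length Xs) * a = a] (mod b)"
    and "set Xs \<subseteq> secondary_classes a b q" "list_all2 (\<in>) xs Xs"
  shows "nu2 a b q Xs \<in> secondary_classes a b q" "sum_list xs \<in> nu2 a b q Xs"
  using class_of_mem[OF assms(1,2) nu2_eq_class_of_sum_list(2)[OF assms]]
  by (simp_all add: nu2_eq_class_of_sum_list(1)[OF assms])

lemma mu2_well_defined:
  assumes "b > 0" "q > 0" "[a ^ length Xs = a] (mod b)"
    and "set Xs \<subseteq> secondary_classes a b q" "list_all2 (\<in>) xs Xs"
  shows "mu2 a b q Xs \<in> secondary_classes a b q" "prod_list xs \<in> mu2 a b q Xs"
  using class_of_mem[OF assms(1,2) mu2_eq_class_of_prod_list(2)[OF assms]]
  by (simp_all add: mu2_eq_class_of_prod_list(1)[OF assms])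

lemma nu2_mset_eq: "mset Xs = mset Ys \<Longrightarrow> nu2 a b q Xs = nu2 a b q Ys"
  unfolding nu2_eq_class_of by (metis mset_map sum_mset_sum_list)

lemma mu2_mset_eq: "mset Xs = mset Ys \<Longrightarrow> mu2 a b q Xs = mu2 a b q Ys"
  unfolding mu2_eq_class_of by (metis mset_map prod_mset_prod_list)

lemma some_elem_representatives:
  assumes "set Xs \<subseteq> secondary_classes a b q"
  shows "list_all2 (\<in>) (map some_elem Xs) Xs"
  using assms by (auto simp: list_all2_map1 list_all2_same intro: some_elem_mem)

lemma nu2_map_sclass:
  assumes "b > 0" "q > 0" "[int (length ks) * a = a] (mod b)" "\<forall>k\<in>set ks. 0 \<le> k \<and> k < q"
  shows "nu2 a b q (map (sclass a b q) ks)
    = sclass a b q ((sum_list ks + (int (length ks) - 1) * a div b) mod q)"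
proof -
  let ?z = "sum_list (map (\<lambda>k. a + b * k) ks)"
  have classes: "set (map (sclass a b q) ks) \<subseteq> secondary_classes a b q"
    using assms(4) by (auto intro: sclass_in_secondary_classes)
  have reps: "list_all2 (\<in>) (map (\<lambda>k. a + b * k) ks) (map (sclass a b q) ks)"
    by (simp add: list_all2_map1 list_all2_map2 list_all2_same mem_sclass_iff)
  note representatives = nu2_eq_class_of_sum_list[OF assms(1,2) _ classes reps]
  have "nu2 a b q (map (sclass a b q) ks) = sclass a b q ((?z - a) div b mod q)"
    using assms(3) representatives class_of_eq[OF assms(1,2)] by simp
  also have "?z - a = (int (length ks) - 1) * a + sum_list ks * b"
    unfolding sum_list_affine by (simp add: algebra_simps)
  finally show ?thesis
    using assms(1) by simp
qed

lemma mu2_map_sclass: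
  assumes "b > 0" "q > 0" "[a ^ length ks = a] (mod b)" "\<forall>k\<in>set ks. 0 \<le> k \<and> k < q"
  shows "mu2 a b q (map (sclass a b q) ks) = sclass a b q
    (((\<Sum>j=1..length ks. a ^ (length ks - j) * b ^ (j - 1) * esym j ks)
       + (a ^ length ks - a) div b) mod q)"
proof -
  let ?z = "prod_list (map (\<lambda>k. a + b * k) ks)"
  let ?T = "\<Sum>j=1..length ks. a ^ (length ks - j) * b ^ (j - 1) * esym j ks"
  have classes: "set (map (sclass a b q) ks) \<subseteq> secondary_classes a b q"
    using assms(4) by (auto intro: sclass_in_secondary_classes)
  have reps: "list_all2 (\<in>) (map (\<lambda>k. a + b * k) ks) (map (sclass a b q) ks)"
    by (simp add: list_all2_map1 list_all2_map2 list_all2_same mem_sclass_iff)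
  note representatives = mu2_eq_class_of_prod_list[OF assms(1,2) _ classes reps]
  have "mu2 a b q (map (sclass a b q) ks) = sclass a b q ((?z - a) div b mod q)"
    using assms(3) representatives class_of_eq[OF assms(1,2)] by simp
  also have "?z - a = (a ^ length ks - a) + ?T * b"
    unfolding prod_list_affine by (simp add: algebra_simps)
  finally show ?thesis
    using assms(1) by (simp add: add.commute)
qed

text \<open>Choosing representatives, both sides become the class of the same integer, because
  multiplication distributes over addition in \<open>\<int>\<close>.\<close>
lemma mu2_update_nu2:
  assumes "b > 0" "q > 0" "[int (length Ys) * a = a] (mod b)" "[a ^ length Xs = a] (mod b)"
    and "set Xs \<subseteq> secondary_classes a b q" "set Ys \<subseteq> secondary_classes a b q"
    and "i < length Xs"
  shows "mu2 a b q (Xs[i := nu2 a b q Ys]) = nu2 a b q (map (\<lambda>Y. mu2 a b q (Xs[i := Y])) Ys)"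
proof -
  let ?S = "secondary_classes a b q"
  define ws where "ws = map some_elem Xs"
  define ys where "ys = map some_elem Ys"
  have update: "set (Xs[i := Y]) \<subseteq> ?S" "list_all2 (\<in>) (ws[i := y]) (Xs[i := Y])"
    if "Y \<in> ?S" "y \<in> Y" for Y y
    using assms(5) that set_update_subset_insert[of Xs i Y]
      list_all2_update_cong[OF some_elem_representatives[OF assms(5)]]
    unfolding ws_def by auto
  have mu2_update: "mu2 a b q (Xs[i := Y]) = class_of a b q (prod_list (ws[i := y]))"
    "mu2 a b q (Xs[i := Y]) \<in> ?S" "prod_list (ws[i := y]) \<in> mu2 a b q (Xs[i := Y])"
    if "Y \<in> ?S" "y \<in> Y" for Y y
  proof -
    have "[a ^ length (Xs[i := Y]) = a] (mod b)"
      using assms(4) by simp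
    note representatives = assms(1,2) this update[OF that]
    show "mu2 a b q (Xs[i := Y]) = class_of a b q (prod_list (ws[i := y]))"
      by (rule mu2_eq_class_of_prod_list(1)[OF representatives])
    show "mu2 a b q (Xs[i := Y]) \<in> ?S" "prod_list (ws[i := y]) \<in> mu2 a b q (Xs[i := Y])"
      by (rule mu2_well_defined[OF representatives])+
  qed
  have nu2_Ys: "nu2 a b q Ys \<in> ?S" "sum_list ys \<in> nu2 a b q Ys"
    using nu2_well_defined[OF assms(1-3,6) some_elem_representatives[OF assms(6)]]
    unfolding ys_def by simp_all
  have factors: "Y \<in> ?S" "some_elem Y \<in> Y" if "Y \<in> set Ys" for Y
    using assms(6) that some_elem_mem by auto
  have "mu2 a b q (Xs[i := nu2 a b q Ys]) = class_of a b q (prod_list (ws[i := sum_list ys]))"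
    using mu2_update(1)[OF nu2_Ys] .
  also have "prod_list (ws[i := sum_list ys]) = sum_list (map (\<lambda>y. prod_list (ws[i := y])) ys)"
    using assms(7) unfolding ws_def by (simp add: prod_list_update_sum_list)
  also have "class_of a b q \<dots> = nu2 a b q (map (\<lambda>Y. mu2 a b q (Xs[i := Y])) Ys)"
  proof (rule nu2_eq_class_of_sum_list(1)[symmetric, OF assms(1,2)])
    show "[int (length (map (\<lambda>Y. mu2 a b q (Xs[i := Y])) Ys)) * a = a] (mod b)"
      using assms(3) by simp
    show "set (map (\<lambda>Y. mu2 a b q (Xs[i := Y])) Ys) \<subseteq> ?S"
      using mu2_update(2) factors by auto
    show "list_all2 (\<in>) (map (\<lambda>y. prod_list (ws[i := y])) ys)
        (map (\<lambda>Y. mu2 a b q (Xs[i := Y])) Ys)"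
      unfolding ys_def using mu2_update(3) factors
      by (simp add: list_all2_map1 list_all2_map2 list_all2_same)
  qed
  finally show ?thesis .
qed

theorem mainTheorem2:
  fixes a b q :: int and m n :: nat
  assumes hb: "b \<ge> 1"
    and ha: "0 \<le> a" "a \<le> b - 1"
    and hm: "m \<ge> 2" "[int m * a = a] (mod b)"
            "\<forall>m'. 2 \<le> m' \<and> m' < m \<longrightarrow> \<not> [int m' * a = a] (mod b)"
    and hn: "n \<ge> 2" "[a ^ n = a] (mod b)"
            "\<forall>n'. 2 \<le> n' \<and> n' < n \<longrightarrow> \<not> [a ^ n' = a] (mod b)"
    and hq: "q \<ge> 1"
  defines "I \<equiv> (int m - 1) * a div b"
    and "J \<equiv> (a ^ n - a) div b"
    and "X \<equiv> sclass a b q"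
    and "S \<equiv> secondary_classes a b q"
  shows
    "(\<forall>ks xs. length ks = m \<and> (\<forall>i<m. 0 \<le> ks ! i \<and> ks ! i < q) \<and> length xs = m
        \<and> (\<forall>i<m. xs ! i \<in> X (ks ! i))
        \<longrightarrow> nu2 a b q (map X ks) \<in> S \<and> sum_list xs \<in> nu2 a b q (map X ks))
   \<and> (\<forall>ks xs. length ks = n \<and> (\<forall>i<n. 0 \<le> ks ! i \<and> ks ! i < q) \<and> length xs = n
        \<and> (\<forall>i<n. xs ! i \<in> X (ks ! i))
        \<longrightarrow> mu2 a b q (map X ks) \<in> S \<and> prod_list xs \<in> mu2 a b q (map X ks))
   \<and> (\<forall>Xs Ys. length Xs = m \<and> set Xs \<subseteq> S \<and> mset Ys = mset Xs
        \<longrightarrow> nu2 a b q Xs = nu2 a b q Ys)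
   \<and> (\<forall>Xs Ys. length Xs = n \<and> set Xs \<subseteq> S \<and> mset Ys = mset Xs
        \<longrightarrow> mu2 a b q Xs = mu2 a b q Ys)
   \<and> (\<forall>Xs Ys i. length Xs = n \<and> set Xs \<subseteq> S \<and> length Ys = m \<and> set Ys \<subseteq> S \<and> i < n
        \<longrightarrow> mu2 a b q (Xs[i := nu2 a b q Ys])
            = nu2 a b q (map (\<lambda>Y. mu2 a b q (Xs[i := Y])) Ys))
   \<and> (\<forall>ks. length ks = m \<and> (\<forall>i<m. 0 \<le> ks ! i \<and> ks ! i < q)
        \<longrightarrow> nu2 a b q (map X ks) = X ((sum_list ks + I) mod q))
   \<and> (\<forall>ks. length ks = n \<and> (\<forall>i<n. 0 \<le> ks ! i \<and> ks ! i < q)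
        \<longrightarrow> mu2 a b q (map X ks)
            = X (((\<Sum>j=1..n. a ^ (n - j) * b ^ (j - 1) * esym j ks) + J) mod q))"
proof -
  have b_pos: "b > 0" and q_pos: "q > 0"
    using hb hq by auto
  have range: "\<forall>k\<in>set ks. 0 \<le> k \<and> k < q" if "\<forall>i<length ks. 0 \<le> ks ! i \<and> ks ! i < q" for ks
    using that by (auto simp: in_set_conv_nth)
  have representatives: "set (map (sclass a b q) ks) \<subseteq> secondary_classes a b q"
    "list_all2 (\<in>) xs (map (sclass a b q) ks)"
    if "length ks = l" "\<forall>i<l. 0 \<le> ks ! i \<and> ks ! i < q"
      "length xs = l" "\<forall>i<l. xs ! i \<in> sclass a b q (ks ! i)" for ks xs l
    using that by (auto simp: list_all2_conv_all_nth in_set_conv_nth intro!: sclass_in_secondary_classes)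
  show ?thesis
    unfolding I_def J_def X_def S_def
  proof ((intro conjI allI impI; elim conjE), goal_cases)
    case (1 ks xs)
    then show ?case
      using nu2_well_defined(1)[OF b_pos q_pos _ representatives[OF 1]] hm(2) by simp
  next
    case (2 ks xs)
    then show ?case
      using nu2_well_defined(2)[OF b_pos q_pos _ representatives[OF 2]] hm(2) by simp
  next
    case (3 ks xs)
    then show ?case
      using mu2_well_defined(1)[OF b_pos q_pos _ representatives[OF 3]] hn(2) by simp
  next
    case (4 ks xs)
    then show ?case
      using mu2_well_defined(2)[OF b_pos q_pos _ representatives[OF 4]] hn(2) by simp
  next
    case (5 Xs Ys)
    then show ?case
      using nu2_mset_eq[of Xs Ys] by simp
  next
    case (6 Xs Ys)
    then show ?case
      using mu2_mset_eq[of Xs Ys] by simp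
  next
    case (7 Xs Ys i)
    then show ?case
      using mu2_update_nu2[OF b_pos q_pos _ _ 7(2,4)] hm(2) hn(2) by simp
  next
    case (8 ks)
    then show ?case
      using nu2_map_sclass[OF b_pos q_pos _ range] hm(2) by simp
  next
    case (9 ks)
    then show ?case
      using mu2_map_sclass[OF b_pos q_pos _ range] hn(2) by simp
  qed
qed

end
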